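(* Let $T$ be a finite tree, let $k\ge 1$, and let $S=(W_1,\dots,W_k)$ be a covering strategy for $T$ with $k$ robots (at prescribed starting vertices) whose length $l(S)$ is minimum among all such covering strategies. Then for each $i$ the set of edges traversed by $W_i$ can be decomposed into two sets: the edges of a path $P(W_i)$ and the edges of a forest $F(W_i)$ (subgraphs of $T$), such that: (a) each edge of $P(W_i)$ is traversed exactly once by the $i$-th robot; (b) each edge of $F(W_i)$ is traversed exactly twice by the $i$-th robot and is never traversed by any other robot; (c) each connected component $C$ of $F(W_i)$ satisfies $\left|V(C)\cap \bigcup_{r=1}^k V(P(W_r))\right|=1$; (d) for every pair $j\neq l$, $V(F(W_j))\cap V(F(W_l))\subseteq \bigcup_{r=1}^k V(P(W_r))$.
   Context: Model: $T=(V,E)$ is a tree; robots move along edges, one edge per unit time step, or stay put. A walk is a sequence $W=(u_1,\dots,u_m)$ of vertices of $T$ in which consecutive terms are equal or adjacent; the robot following it stays at $u_m$ afterwards. The time of $W$ is $t(W)=m-1$; the length $l(W)$ is the number of indices $i\in\{1,\dots,m-1\}$ with $u_i\neq u_{i+1}$ (i.e. the number of edge traversals, counted with multiplicity). A strategy with $k$ robots is a $k$-tuple $S=(W_1,\dots,W_k)$ of walks, where $W_i$ starts at the prescribed starting vertex of robot $i$; it is covering if every vertex of $T$ lies in some $W_i$. Its length is $l(S)=\sum_{i=1}^k l(W_i)$. For a graph $G$, $V(G)$ is its vertex set. *)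

theory Defs
  imports Main
begin

definition graph :: "'a set \<Rightarrow> 'a set set \<Rightarrow> bool" where
  "graph V E \<longleftrightarrow> finite V \<and> (\<forall>e\<in>E. \<exists>u v. u \<noteq> v \<and> u \<in> V \<and> v \<in> V \<and> e = {u, v})"

definition adj :: "'a set set \<Rightarrow> 'a \<Rightarrow> 'a \<Rightarrow> bool" where
  "adj E u v \<longleftrightarrow> u \<noteq> v \<and> {u, v} \<in> E"

definition is_path :: "'a set set \<Rightarrow> 'a list \<Rightarrow> bool" where
  "is_path E xs \<longleftrightarrow> xs \<noteq> [] \<and> distinct xs \<and>
     (\<forall>i. i + 1 < length xs \<longrightarrow> adj E (xs ! i) (xs ! (i + 1)))"

definition is_cycle :: "'a set set \<Rightarrow> 'a list \<Rightarrow> bool" where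
  "is_cycle E xs \<longleftrightarrow> length xs \<ge> 3 \<and> is_path E xs \<and> adj E (last xs) (hd xs)"

definition connected_graph :: "'a set \<Rightarrow> 'a set set \<Rightarrow> bool" where
  "connected_graph V E \<longleftrightarrow>
     (\<forall>u\<in>V. \<forall>v\<in>V. \<exists>xs. is_path E xs \<and> hd xs = u \<and> last xs = v)"

definition tree :: "'a set \<Rightarrow> 'a set set \<Rightarrow> bool" where
  "tree V E \<longleftrightarrow> graph V E \<and> V \<noteq> {} \<and> connected_graph V E \<and> \<not> (\<exists>xs. is_cycle E xs)"

definition path_edges :: "'a list \<Rightarrow> 'a set set" where
  "path_edges xs = {{xs ! i, xs ! (i + 1)} | i. i + 1 < length xs}"

text \<open>Walks: consecutive vertices equal (waiting) or adjacent.\<close>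
definition is_walk :: "'a set \<Rightarrow> 'a set set \<Rightarrow> 'a list \<Rightarrow> bool" where
  "is_walk V E W \<longleftrightarrow> W \<noteq> [] \<and> set W \<subseteq> V \<and>
     (\<forall>i. i + 1 < length W \<longrightarrow> W ! i = W ! (i + 1) \<or> adj E (W ! i) (W ! (i + 1)))"

definition walk_length :: "'a list \<Rightarrow> nat" where
  "walk_length W = card {i. i + 1 < length W \<and> W ! i \<noteq> W ! (i + 1)}"

definition trav_count :: "'a list \<Rightarrow> 'a set \<Rightarrow> nat" where
  "trav_count W e = card {i. i + 1 < length W \<and> W ! i \<noteq> W ! (i + 1) \<and> {W ! i, W ! (i + 1)} = e}"

definition traversed :: "'a list \<Rightarrow> 'a set set" where
  "traversed W = {{W ! i, W ! (i + 1)} | i. i + 1 < length W \<and> W ! i \<noteq> W ! (i + 1)}"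

definition strategy :: "'a set \<Rightarrow> 'a set set \<Rightarrow> (nat \<Rightarrow> 'a) \<Rightarrow> nat \<Rightarrow> (nat \<Rightarrow> 'a list) \<Rightarrow> bool" where
  "strategy V E s k W \<longleftrightarrow> (\<forall>i<k. is_walk V E (W i) \<and> hd (W i) = s i)"

definition covering :: "'a set \<Rightarrow> nat \<Rightarrow> (nat \<Rightarrow> 'a list) \<Rightarrow> bool" where
  "covering V k W \<longleftrightarrow> V \<subseteq> (\<Union>i<k. set (W i))"

definition strategy_length :: "nat \<Rightarrow> (nat \<Rightarrow> 'a list) \<Rightarrow> nat" where
  "strategy_length k W = (\<Sum>i<k. walk_length (W i))"

text \<open>Vertex set of the (edge-induced) subgraph with edge set F.\<close>
definition edge_verts :: "'a set set \<Rightarrow> 'a set" where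
  "edge_verts F = \<Union>F"

definition component :: "'a set set \<Rightarrow> 'a \<Rightarrow> 'a set" where
  "component F v = {w. (adj F)\<^sup>*\<^sup>* v w}"

end

theory Submission
  imports Defs
begin

(* Fix for each robot the path P i in its walk from its start to its end. In a tree an edge
   traversed only once separates the two ends of the walk, so it lies on P i; hence
   l(W i) >= 2 |D i| - |P i| for the set D i of traversed edges. Conversely, D i can be toured
   from s i to the end of P i with exactly 2 |D i| - |P i| moves, so by optimality path edges
   are traversed once and the remaining ones, forming F i, twice. If another robot r visited a
   vertex beyond an edge e of F i (as seen from s i), then r could take over everything beyond
   e and the two traversals of e would be saved. This exclusiveness gives (b), (c) and (d). *)

section \<open>Reachability and paths in edge sets\<close>

lemma adj_sym: "adj A u v \<Longrightarrow> adj A v u"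
  unfolding adj_def by (auto simp: insert_commute)

lemma adj_edge: "adj A u v \<Longrightarrow> {u, v} \<in> A"
  unfolding adj_def by auto

lemma adj_mono: "adj A u v \<Longrightarrow> A \<subseteq> B \<Longrightarrow> adj B u v"
  unfolding adj_def by auto

lemma rtranclp_adj_mono: "(adj A)\<^sup>*\<^sup>* u v \<Longrightarrow> A \<subseteq> B \<Longrightarrow> (adj B)\<^sup>*\<^sup>* u v"
  by (metis adj_mono mono_rtranclp)

lemma rtranclp_adj_sym: "(adj A)\<^sup>*\<^sup>* u v \<Longrightarrow> (adj A)\<^sup>*\<^sup>* v u"
  by (induction rule: rtranclp_induct) (auto dest: adj_sym intro: converse_rtranclp_into_rtranclp)

lemma rtranclp_adj_in_Union: "(adj A)\<^sup>*\<^sup>* a b \<Longrightarrow> b = a \<or> b \<in> \<Union>A"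
proof (induction rule: rtranclp_induct)
  case (step y z)
  then show ?case using adj_edge[of A y z] by blast
qed simp

lemma rtranclp_nth_chain:
  assumes "\<And>m. a \<le> m \<Longrightarrow> m < b \<Longrightarrow> xs ! m = xs ! Suc m \<or> R (xs ! m) (xs ! Suc m)"
    and "a \<le> b"
  shows "R\<^sup>*\<^sup>* (xs ! a) (xs ! b)"
  using assms
proof (induction b)
  case (Suc b)
  show ?case
  proof (cases "a = Suc b")
    case False
    then have "R\<^sup>*\<^sup>* (xs ! a) (xs ! b)" "xs ! b = xs ! Suc b \<or> R (xs ! b) (xs ! Suc b)"
      using Suc by auto
    then show ?thesis by (metis rtranclp.rtrancl_into_rtrancl)
  qed simp
qed simp

lemma mem_component_iff: "x \<in> component A v \<longleftrightarrow> (adj A)\<^sup>*\<^sup>* v x"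
  unfolding component_def by simp

definition component_edges :: "'a set set \<Rightarrow> 'a \<Rightarrow> 'a set set" where
  "component_edges A v = {f \<in> A. f \<subseteq> component A v}"

lemma component_edges_subset: "component_edges A v \<subseteq> A"
  unfolding component_edges_def by auto

lemma rtranclp_component_edges:
  assumes "(adj A)\<^sup>*\<^sup>* v x"
  shows "(adj (component_edges A v))\<^sup>*\<^sup>* v x"
  using assms
proof (induction rule: rtranclp_induct)
  case (step y z)
  then have "(adj A)\<^sup>*\<^sup>* v z" by (meson rtranclp.rtrancl_into_rtrancl)
  with step have "adj (component_edges A v) y z"
    unfolding adj_def component_edges_def component_def by auto
  with step.IH show ?case by (rule rtranclp.rtrancl_into_rtrancl)
qed simp

lemma component_subset_component_edges:
  "component A v \<subseteq> {v} \<union> \<Union>(component_edges A v)"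
  using rtranclp_adj_in_Union[OF rtranclp_component_edges] by (fastforce simp: mem_component_iff)

lemma Union_component_edges_connected:
  "\<Union>(component_edges A v) \<subseteq> component (component_edges A v) v"
  using rtranclp_component_edges unfolding component_edges_def by (fastforce simp: mem_component_iff)

lemma is_path_singleton: "is_path A [x]"
  unfolding is_path_def by auto

lemma is_path_mono: "is_path A xs \<Longrightarrow> A \<subseteq> B \<Longrightarrow> is_path B xs"
  unfolding is_path_def by (metis adj_mono)

lemma is_path_nonempty: "is_path A xs \<Longrightarrow> xs \<noteq> []"
  unfolding is_path_def by simp

lemma is_path_snoc:
  assumes "is_path A xs" "z \<notin> set xs" "adj A (last xs) z"
  shows "is_path A (xs @ [z])"
  unfolding is_path_def
proof (intro conjI allI impI)
  show "xs @ [z] \<noteq> []" by simp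
  show "distinct (xs @ [z])" using assms unfolding is_path_def by auto
  fix i assume i: "i + 1 < length (xs @ [z])"
  show "adj A ((xs @ [z]) ! i) ((xs @ [z]) ! (i + 1))"
  proof (cases "i + 1 < length xs")
    case True
    then show ?thesis using assms(1) unfolding is_path_def by (auto simp: nth_append)
  next
    case False
    then have "i = length xs - 1" "xs \<noteq> []" using i assms(1) unfolding is_path_def by auto
    then show ?thesis using assms(3) by (auto simp: nth_append last_conv_nth)
  qed
qed

lemma rtranclp_adj_imp_path:
  assumes "(adj A)\<^sup>*\<^sup>* a b"
  shows "\<exists>xs. is_path A xs \<and> hd xs = a \<and> last xs = b"
  using assms
proof (induction rule: rtranclp_induct)
  case base
  then show ?case using is_path_singleton by fastforce
next
  case (step y z)
  then obtain xs where xs: "is_path A xs" "hd xs = a" "last xs = y" by blast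
  have ne: "xs \<noteq> []" using is_path_nonempty[OF xs(1)] .
  show ?case
  proof (cases "z \<in> set xs")
    case True
    then obtain n where n: "n < length xs" "xs ! n = z" by (meson in_set_conv_nth)
    have "is_path A (take (Suc n) xs)" using xs(1) n(1) unfolding is_path_def by auto
    moreover have "hd (take (Suc n) xs) = a" using xs ne by (simp add: hd_take)
    moreover have "last (take (Suc n) xs) = z" using n by (simp add: take_Suc_conv_app_nth)
    ultimately show ?thesis by blast
  next
    case False
    then show ?thesis using is_path_snoc[OF xs(1) False] xs step ne by auto
  qed
qed

lemma path_edges_subset: "is_path A P \<Longrightarrow> path_edges P \<subseteq> A"
  unfolding is_path_def path_edges_def using adj_edge by fastforce

lemma Union_path_edges_subset: "\<Union>(path_edges P) \<subseteq> set P"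
  unfolding path_edges_def by auto

lemma set_path_subset: "P \<noteq> [] \<Longrightarrow> set P \<subseteq> {hd P} \<union> \<Union>(path_edges P)"
proof
  fix x assume "P \<noteq> []" "x \<in> set P"
  then obtain i where i: "i < length P" "P ! i = x" by (meson in_set_conv_nth)
  show "x \<in> {hd P} \<union> \<Union>(path_edges P)"
  proof (cases i)
    case 0
    then show ?thesis using i \<open>P \<noteq> []\<close> by (simp add: hd_conv_nth)
  next
    case (Suc j)
    then have "{P ! j, P ! (j + 1)} \<in> path_edges P" using i unfolding path_edges_def by auto
    then show ?thesis using i Suc by auto
  qed
qed

lemma path_rtranclp_nth:
  assumes "is_path A P" "i < length P"
  shows "(adj (path_edges P))\<^sup>*\<^sup>* (hd P) (P ! i)"
proof -
  have "(adj (path_edges P))\<^sup>*\<^sup>* (P ! 0) (P ! i)"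
  proof (rule rtranclp_nth_chain)
    fix m assume "m < i"
    then have "Suc m < length P" using assms by auto
    then show "P ! m = P ! Suc m \<or> adj (path_edges P) (P ! m) (P ! Suc m)"
      using assms(1) unfolding is_path_def path_edges_def adj_def
      by (auto simp: nth_eq_iff_index_eq)
  qed simp
  then show ?thesis using is_path_nonempty[OF assms(1)] by (simp add: hd_conv_nth)
qed

lemma card_path_edges:
  assumes "distinct P"
  shows "card (path_edges P) = length P - 1"
proof -
  have "path_edges P = (\<lambda>i. {P ! i, P ! (i + 1)}) ` {..<length P - 1}"
    unfolding path_edges_def by auto
  moreover have "inj_on (\<lambda>i. {P ! i, P ! (i + 1)}) {..<length P - 1}"
  proof (rule inj_onI)
    fix i j assume ij: "i \<in> {..<length P - 1}" "j \<in> {..<length P - 1}"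
      "{P ! i, P ! (i + 1)} = {P ! j, P ! (j + 1)}"
    then have "P ! i = P ! j \<or> (P ! i = P ! (j + 1) \<and> P ! (i + 1) = P ! j)"
      by (auto simp: doubleton_eq_iff)
    then show "i = j" using ij(1,2) assms by (auto simp: nth_eq_iff_index_eq)
  qed
  ultimately show ?thesis by (simp add: card_image)
qed

lemma is_path_Diff_edge: "is_path A P \<Longrightarrow> e \<notin> path_edges P \<Longrightarrow> is_path (A - {e}) P"
  unfolding is_path_def path_edges_def adj_def by fastforce

lemma is_path_component_edges:
  assumes "is_path A P"
  shows "is_path (component_edges A (hd P)) P"
proof -
  have reach: "P ! i \<in> component A (hd P)" if "i < length P" for i
    using rtranclp_adj_mono[OF path_rtranclp_nth[OF assms that] path_edges_subset[OF assms]]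
    by (simp add: mem_component_iff)
  show ?thesis
    using assms reach unfolding is_path_def component_edges_def adj_def by auto
qed

section \<open>Walks\<close>

lemma walk_length_Cons:
  assumes "xs \<noteq> []"
  shows "walk_length (x # xs) = (if x = hd xs then 0 else 1) + walk_length xs"
proof -
  define M where "M = {i. i + 1 < length xs \<and> xs ! i \<noteq> xs ! (i + 1)}"
  have moves: "{i. i + 1 < length (x # xs) \<and> (x # xs) ! i \<noteq> (x # xs) ! (i + 1)}
      = (if x = hd xs then {} else {0}) \<union> Suc ` M"
  proof (rule set_eqI)
    fix i
    show "i \<in> {i. i + 1 < length (x # xs) \<and> (x # xs) ! i \<noteq> (x # xs) ! (i + 1)} \<longleftrightarrow>
        i \<in> (if x = hd xs then {} else {0}) \<union> Suc ` M"
      using assms by (cases i) (auto simp: M_def hd_conv_nth)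
  qed
  have "finite M" unfolding M_def by (rule finite_subset[of _ "{..<length xs}"]) auto
  then show ?thesis
    unfolding walk_length_def moves M_def[symmetric] by (simp add: card_image)
qed

lemma walk_length_singleton [simp]: "walk_length [x] = 0"
  unfolding walk_length_def by simp

lemma walk_length_snoc:
  "xs \<noteq> [] \<Longrightarrow> walk_length (xs @ [y]) = walk_length xs + (if last xs = y then 0 else 1)"
proof (induction xs)
  case (Cons a xs)
  then show ?case by (cases "xs = []") (simp_all add: walk_length_Cons)
qed simp

lemma walk_length_append:
  "walk_length (xs @ y # ys) = walk_length (xs @ [y]) + walk_length (y # ys)"
proof (induction xs)
  case (Cons a xs)
  have "hd (xs @ y # ys) = hd (xs @ [y])" by (cases xs) auto
  then show ?case using Cons by (simp add: walk_length_Cons)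
qed simp

lemma is_walk_nonempty: "is_walk V E W \<Longrightarrow> W \<noteq> []"
  unfolding is_walk_def by simp

lemma is_walk_singleton [simp]: "is_walk V E [x] \<longleftrightarrow> x \<in> V"
  unfolding is_walk_def by simp

lemma is_walk_Cons:
  assumes "xs \<noteq> []"
  shows "is_walk V E (x # xs) \<longleftrightarrow> x \<in> V \<and> (x = hd xs \<or> adj E x (hd xs)) \<and> is_walk V E xs"
proof -
  have "(\<forall>i. i + 1 < length (x # xs) \<longrightarrow>
          (x # xs) ! i = (x # xs) ! (i + 1) \<or> adj E ((x # xs) ! i) ((x # xs) ! (i + 1)))
    \<longleftrightarrow> (x = hd xs \<or> adj E x (hd xs)) \<and>
        (\<forall>i. i + 1 < length xs \<longrightarrow> xs ! i = xs ! (i + 1) \<or> adj E (xs ! i) (xs ! (i + 1)))"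
    (is "?L \<longleftrightarrow> ?R")
  proof
    assume L: ?L
    show ?R
    proof
      show "x = hd xs \<or> adj E x (hd xs)"
        using L[rule_format, of 0] assms by (simp add: hd_conv_nth)
      show "\<forall>i. i + 1 < length xs \<longrightarrow> xs ! i = xs ! (i + 1) \<or> adj E (xs ! i) (xs ! (i + 1))"
        using L by (metis Suc_eq_plus1 length_Cons nth_Cons_Suc Suc_less_eq)
    qed
  next
    assume R: ?R
    show ?L
    proof (intro allI impI)
      fix i assume "i + 1 < length (x # xs)"
      then show "(x # xs) ! i = (x # xs) ! (i + 1) \<or> adj E ((x # xs) ! i) ((x # xs) ! (i + 1))"
        using R assms by (cases i) (auto simp: hd_conv_nth)
    qed
  qed
  then show ?thesis unfolding is_walk_def using assms by auto
qed

lemma is_walk_append: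
  "is_walk V E (xs @ y # ys) \<longleftrightarrow> is_walk V E (xs @ [y]) \<and> is_walk V E (y # ys)"
proof (induction xs)
  case Nil
  then show ?case by (cases ys) (auto simp: is_walk_Cons)
next
  case (Cons a xs)
  have "hd (xs @ y # ys) = hd (xs @ [y])" by (cases xs) auto
  then show ?case using Cons by (simp add: is_walk_Cons)
qed

lemma is_walk_snoc:
  "is_walk V E xs \<Longrightarrow> y \<in> V \<Longrightarrow> last xs = y \<or> adj E (last xs) y \<Longrightarrow> is_walk V E (xs @ [y])"
proof (induction xs)
  case (Cons a xs)
  then show ?case by (cases "xs = []") (simp_all add: is_walk_Cons)
qed (simp add: is_walk_def)

lemma walk_splice:
  assumes W1: "is_walk V E W1" "u \<in> set W1"
    and W2: "is_walk V E W2" "hd W2 = w" "last W2 = w"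
    and uw: "adj E u w"
  obtains W where "is_walk V E W" "hd W = hd W1" "last W = last W1"
    "set W = set W1 \<union> set W2" "walk_length W = walk_length W1 + walk_length W2 + 2"
proof -
  obtain A B where AB: "W1 = A @ u # B" using W1(2) by (meson split_list)
  have ne: "W2 \<noteq> []" using is_walk_nonempty[OF W2(1)] .
  have uV: "u \<in> V" using W1 unfolding is_walk_def by auto
  have wu: "u \<noteq> w" "adj E w u" using uw adj_sym[OF uw] unfolding adj_def by auto
  have A: "is_walk V E (A @ [u])" "is_walk V E (u # B)"
    using W1(1) AB is_walk_append[of V E A u B] by auto
  have "is_walk V E (W2 @ [u])" using is_walk_snoc[OF W2(1) uV] W2(3) wu by auto
  then have "is_walk V E (W2 @ u # B)" using A is_walk_append[of V E W2 u B] by auto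
  moreover have "hd (W2 @ u # B) = w" using ne W2(2) by simp
  ultimately have "is_walk V E (u # W2 @ u # B)" using is_walk_Cons[of "W2 @ u # B"] uV uw by auto
  then have walk: "is_walk V E (A @ u # W2 @ u # B)"
    using A is_walk_append[of V E A u "W2 @ u # B"] by auto
  have "walk_length (W2 @ u # B) = walk_length W2 + 1 + walk_length (u # B)"
    using walk_length_append[of W2 u B] walk_length_snoc[OF ne, of u] W2(3) wu by simp
  moreover have "walk_length (u # W2 @ u # B) = 1 + walk_length (W2 @ u # B)"
    using walk_length_Cons[of "W2 @ u # B" u] ne W2(2) wu by simp
  ultimately have "walk_length (A @ u # W2 @ u # B) = walk_length W1 + walk_length W2 + 2"
    using walk_length_append[of A u "W2 @ u # B"] walk_length_append[of A u B] AB by simp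
  moreover have "hd (A @ u # W2 @ u # B) = hd W1" using AB by (cases A) auto
  ultimately show ?thesis using that[OF walk] AB by auto
qed

lemma traversed_subset: "is_walk V E W \<Longrightarrow> traversed W \<subseteq> E"
  unfolding is_walk_def traversed_def adj_def by fastforce

lemma finite_traversed: "finite (traversed W)"
proof -
  have "traversed W = (\<lambda>i. {W ! i, W ! (i + 1)}) ` {i. i + 1 < length W \<and> W ! i \<noteq> W ! (i + 1)}"
    unfolding traversed_def by auto
  moreover have "finite {i. i + 1 < length W \<and> W ! i \<noteq> W ! (i + 1)}"
    by (rule finite_subset[of _ "{..<length W}"]) auto
  ultimately show ?thesis by simp
qed

lemma Union_traversed_subset: "\<Union>(traversed W) \<subseteq> set W"
  unfolding traversed_def by auto

lemma set_walk_subset: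
  assumes "is_walk V E W"
  shows "set W \<subseteq> {hd W} \<union> \<Union>(traversed W)"
proof -
  have "W ! j \<in> {hd W} \<union> \<Union>(traversed W)" if "j < length W" for j
    using that
  proof (induction j)
    case 0
    then show ?case using is_walk_nonempty[OF assms] by (simp add: hd_conv_nth)
  next
    case (Suc j)
    then show ?case
      by (cases "W ! j = W ! Suc j") (auto simp: traversed_def)
  qed
  then show ?thesis by (metis in_set_conv_nth subsetI)
qed

lemma walk_rtranclp_nth:
  assumes "is_walk V E W" "j < length W"
  shows "(adj (traversed W))\<^sup>*\<^sup>* (hd W) (W ! j)"
proof -
  have "(adj (traversed W))\<^sup>*\<^sup>* (W ! 0) (W ! j)"
  proof (rule rtranclp_nth_chain)
    fix m assume "m < j"
    then have "Suc m < length W" using assms by auto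
    then show "W ! m = W ! Suc m \<or> adj (traversed W) (W ! m) (W ! Suc m)"
      unfolding adj_def traversed_def by fastforce
  qed simp
  then show ?thesis using is_walk_nonempty[OF assms(1)] by (simp add: hd_conv_nth)
qed

lemma set_walk_subset_component:
  assumes "is_walk V E W"
  shows "set W \<subseteq> component (traversed W) (hd W)"
  using walk_rtranclp_nth[OF assms] by (auto simp: in_set_conv_nth mem_component_iff)

lemma walk_length_eq_sum_trav_count: "walk_length W = (\<Sum>e\<in>traversed W. trav_count W e)"
proof -
  define M where "M = {i. i + 1 < length W \<and> W ! i \<noteq> W ! (i + 1)}"
  define h where "h = (\<lambda>i. {W ! i, W ! (i + 1)})"
  have fin: "finite M" unfolding M_def by (rule finite_subset[of _ "{..<length W}"]) auto
  have tr: "traversed W = h ` M" unfolding traversed_def M_def h_def by auto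
  have "card M = (\<Sum>e\<in>h ` M. card {i\<in>M. h i = e})"
    using card_eq_sum[of M] sum.image_gen[OF fin, of "\<lambda>_. 1::nat" h] fin by simp
  moreover have "trav_count W e = card {i\<in>M. h i = e}" for e
    unfolding trav_count_def M_def h_def by (intro arg_cong[where f = card]) auto
  ultimately show ?thesis unfolding walk_length_def tr M_def by simp
qed

lemma trav_count_pos_iff: "trav_count W e > 0 \<longleftrightarrow> e \<in> traversed W"
  unfolding trav_count_def traversed_def
  by (subst card_gt_0_iff) (auto intro: finite_subset[of _ "{..<length W}"])

lemma path_is_walk:
  assumes "is_path E P" "set P \<subseteq> V"
  shows "is_walk V E P" "walk_length P = card (path_edges P)"
proof -
  show "is_walk V E P" using assms unfolding is_path_def is_walk_def by auto
  have "{i. i + 1 < length P \<and> P ! i \<noteq> P ! (i + 1)} = {..<length P - 1}"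
    using assms(1) unfolding is_path_def by (auto simp: nth_eq_iff_index_eq)
  then show "walk_length P = card (path_edges P)"
    using assms(1) unfolding walk_length_def is_path_def by (simp add: card_path_edges)
qed

lemma walk_path_between_ends:
  assumes "is_walk V E W"
  shows "\<exists>P. is_path (traversed W) P \<and> hd P = hd W \<and> last P = last W"
proof -
  have "(adj (traversed W))\<^sup>*\<^sup>* (hd W) (last W)"
    using walk_rtranclp_nth[OF assms, of "length W - 1"] is_walk_nonempty[OF assms]
    by (simp add: last_conv_nth)
  then show ?thesis by (rule rtranclp_adj_imp_path)
qed

section \<open>Trees\<close>

lemma tree_edge_doubleton:
  assumes "tree V E" "e \<in> E"
  obtains a b where "a \<noteq> b" "a \<in> V" "b \<in> V" "e = {a, b}"
  using assms unfolding tree_def graph_def by blast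

lemma tree_Union_edges_subset: "tree V E \<Longrightarrow> \<Union>E \<subseteq> V"
  by (metis Union_least empty_subsetI insert_subset tree_edge_doubleton)

lemma tree_edge_bridge:
  assumes "tree V E" "{u, v} \<in> E" "u \<noteq> v" "A \<subseteq> E - {{u, v}}"
  shows "\<not> (adj A)\<^sup>*\<^sup>* u v"
proof
  assume "(adj A)\<^sup>*\<^sup>* u v"
  then obtain xs where xs: "is_path A xs" "hd xs = u" "last xs = v"
    by (metis rtranclp_adj_imp_path)
  have ne: "xs \<noteq> []" using is_path_nonempty[OF xs(1)] .
  have "length xs \<noteq> 1"
  proof
    assume "length xs = 1"
    then have "hd xs = last xs" by (cases xs) auto
    then show False using xs assms(3) by simp
  qed
  moreover have "length xs \<noteq> 2"
  proof
    assume two: "length xs = 2"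
    then have "adj A (xs ! 0) (xs ! 1)" using xs(1) unfolding is_path_def by auto
    moreover have "xs ! 0 = u" "xs ! 1 = v" using xs ne two by (simp_all add: hd_conv_nth last_conv_nth)
    ultimately have "{u, v} \<in> A" using adj_edge by metis
    then show False using assms(4) by auto
  qed
  moreover have "length xs \<noteq> 0" using ne by simp
  ultimately have "length xs \<ge> 3" by linarith
  moreover have "is_path E xs" using is_path_mono[OF xs(1)] assms(4) by blast
  moreover have "adj E (last xs) (hd xs)"
    using xs assms(2,3) unfolding adj_def by (simp add: insert_commute)
  ultimately have "is_cycle E xs" unfolding is_cycle_def by blast
  then show False using assms(1) unfolding tree_def by blast
qed

lemma trav_count_one_imp_path_edge:
  assumes tree: "tree V E" and W: "is_walk V E W"
    and P: "is_path E P" "hd P = hd W" "last P = last W"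
    and once: "trav_count W e = 1"
  shows "e \<in> path_edges P"
proof (rule ccontr)
  assume off_path: "e \<notin> path_edges P"
  define I where "I = {i. i + 1 < length W \<and> W ! i \<noteq> W ! (i + 1) \<and> {W ! i, W ! (i + 1)} = e}"
  have "card I = 1" using once unfolding I_def trav_count_def by simp
  then obtain j where I: "I = {j}" by (meson card_1_singletonE)
  then have j: "j + 1 < length W" "W ! j \<noteq> W ! (j + 1)" "{W ! j, W ! (j + 1)} = e"
    unfolding I_def by auto
  have "e \<in> E" using traversed_subset[OF W] j unfolding traversed_def by auto
  define A where "A = E - {e}"
  have step: "W ! m = W ! Suc m \<or> adj A (W ! m) (W ! Suc m)" if "Suc m < length W" "m \<noteq> j" for m
    using W that I unfolding is_walk_def A_def I_def adj_def by auto
  have "(adj A)\<^sup>*\<^sup>* (W ! 0) (W ! j)" by (rule rtranclp_nth_chain) (use step j in auto)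
  then have to_start: "(adj A)\<^sup>*\<^sup>* (W ! j) (hd W)"
    using is_walk_nonempty[OF W] by (simp add: hd_conv_nth rtranclp_adj_sym)
  have "(adj A)\<^sup>*\<^sup>* (W ! (j + 1)) (W ! (length W - 1))"
    by (rule rtranclp_nth_chain) (use step j in auto)
  then have from_end: "(adj A)\<^sup>*\<^sup>* (last W) (W ! (j + 1))"
    using is_walk_nonempty[OF W] by (simp add: last_conv_nth rtranclp_adj_sym)
  have "(adj (path_edges P))\<^sup>*\<^sup>* (hd P) (last P)"
    using path_rtranclp_nth[OF P(1), of "length P - 1"] is_path_nonempty[OF P(1)]
    by (simp add: last_conv_nth)
  moreover have "path_edges P \<subseteq> A" using path_edges_subset[OF P(1)] off_path unfolding A_def by auto
  ultimately have "(adj A)\<^sup>*\<^sup>* (hd W) (last W)" using P(2,3) rtranclp_adj_mono by metis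
  then have "(adj A)\<^sup>*\<^sup>* (W ! j) (W ! (j + 1))"
    using to_start from_end by (meson rtranclp_trans)
  then show False
    using tree_edge_bridge[OF tree, of "W ! j" "W ! (j + 1)" A] j \<open>e \<in> E\<close> unfolding A_def by auto
qed

lemma trav_count_ge_path_weight:
  assumes "tree V E" "is_walk V E W" "is_path E P" "hd P = hd W" "last P = last W"
    and "e \<in> traversed W"
  shows "(if e \<in> path_edges P then 1 else 2) \<le> trav_count W e"
  using trav_count_pos_iff[of W e] assms(6) trav_count_one_imp_path_edge[OF assms(1-5)]
  by (cases "trav_count W e = 1") auto

lemma sum_path_weight:
  assumes "finite D" "path_edges P \<subseteq> D"
  shows "(\<Sum>e\<in>D. if e \<in> path_edges P then 1 else 2::nat) + card (path_edges P) = 2 * card D"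
proof -
  have "(\<Sum>e\<in>D. if e \<in> path_edges P then 1 else 2::nat)
      = card (path_edges P) + 2 * card (D - path_edges P)"
    using assms by (simp add: sum.If_cases Diff_eq Int_absorb1)
  moreover have "card D = card (path_edges P) + card (D - path_edges P)"
    using assms by (metis card_Diff_subset finite_subset le_add_diff_inverse card_mono)
  ultimately show ?thesis by simp
qed

lemma walk_length_lower_bound:
  assumes "tree V E" "is_walk V E W" "is_path (traversed W) P" "hd P = hd W" "last P = last W"
  shows "2 * card (traversed W) \<le> walk_length W + card (path_edges P)"
proof -
  have P: "is_path E P" using is_path_mono[OF assms(3) traversed_subset[OF assms(2)]] .
  have "(\<Sum>e\<in>traversed W. if e \<in> path_edges P then 1 else 2::nat) \<le> walk_length W"
    unfolding walk_length_eq_sum_trav_count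
    using trav_count_ge_path_weight[OF assms(1,2) P assms(4,5)] by (simp add: sum_mono)
  then show ?thesis
    using sum_path_weight[OF finite_traversed path_edges_subset[OF assms(3)]] by simp
qed

lemma Diff_edge_endpoint_in_component:
  assumes "\<Union>D \<subseteq> component D s" "{a, b} \<in> D"
  shows "a \<in> component (D - {{a, b}}) s \<or> b \<in> component (D - {{a, b}}) s"
proof -
  have "(adj D)\<^sup>*\<^sup>* s x \<Longrightarrow> (adj (D - {{a, b}}))\<^sup>*\<^sup>* s x
      \<or> (adj (D - {{a, b}}))\<^sup>*\<^sup>* s a \<or> (adj (D - {{a, b}}))\<^sup>*\<^sup>* s b" for x
  proof (induction rule: rtranclp_induct)
    case (step y z)
    show ?case
    proof (cases "{y, z} = {a, b}")
      case True
      then show ?thesis using step by (auto simp: doubleton_eq_iff)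
    next
      case False
      then have "adj (D - {{a, b}}) y z" using step(2) unfolding adj_def by auto
      then show ?thesis using step by (meson rtranclp.rtrancl_into_rtrancl)
    qed
  qed simp
  moreover have "(adj D)\<^sup>*\<^sup>* s a" using assms by (auto simp: mem_component_iff)
  ultimately show ?thesis by (auto simp: mem_component_iff)
qed

lemma component_Diff_edge_cover:
  assumes "u \<in> component (D - {{u, w}}) s"
  shows "component D s \<subseteq> component (D - {{u, w}}) s \<union> component (D - {{u, w}}) w"
proof
  fix x assume "x \<in> component D s"
  then have "(adj D)\<^sup>*\<^sup>* s x" by (simp add: mem_component_iff)
  then show "x \<in> component (D - {{u, w}}) s \<union> component (D - {{u, w}}) w"
  proof (induction rule: rtranclp_induct)
    case base
    then show ?case by (simp add: mem_component_iff)
  next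
    case (step y z)
    show ?case
    proof (cases "{y, z} = {u, w}")
      case True
      then show ?thesis using assms by (auto simp: doubleton_eq_iff mem_component_iff)
    next
      case False
      then have "adj (D - {{u, w}}) y z" using step(2) unfolding adj_def by auto
      then show ?thesis using step.IH rtranclp.rtrancl_into_rtrancl[of "adj (D - {{u, w}})" _ y z]
        by (auto simp: mem_component_iff)
    qed
  qed
qed

lemma component_edges_cover:
  assumes "\<forall>f\<in>A. \<exists>a b. f = {a, b}" "\<Union>A \<subseteq> component A s \<union> component A w"
  shows "A = component_edges A s \<union> component_edges A w"
proof
  show "A \<subseteq> component_edges A s \<union> component_edges A w"
  proof
    fix f assume f: "f \<in> A"
    then obtain a b where ab: "f = {a, b}" using assms(1) by blast
    have "a = b \<or> adj A a b" using f ab unfolding adj_def by auto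
    then have "b \<in> component A x" if "a \<in> component A x" for x
      using that rtranclp.rtrancl_into_rtrancl[of "adj A" x a b] by (auto simp: mem_component_iff)
    moreover have "a \<in> component A s \<union> component A w" using assms(2) f ab by auto
    ultimately show "f \<in> component_edges A s \<union> component_edges A w"
      using f ab unfolding component_edges_def by auto
  qed
qed (auto simp: component_edges_def)

lemma component_edges_disjoint:
  assumes "{} \<notin> A" "w \<notin> component A s"
  shows "component_edges A s \<inter> component_edges A w = {}"
proof (rule equals0I)
  fix f assume f: "f \<in> component_edges A s \<inter> component_edges A w"
  then have "f \<in> A" unfolding component_edges_def by blast
  then obtain x where "x \<in> f" using assms(1) by (metis all_not_in_conv)
  then have "(adj A)\<^sup>*\<^sup>* s x" "(adj A)\<^sup>*\<^sup>* w x"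
    using f unfolding component_edges_def by (auto simp: mem_component_iff)
  then have "w \<in> component A s" by (meson mem_component_iff rtranclp_adj_sym rtranclp_trans)
  with assms(2) show False by simp
qed

lemma tree_cut_edge_components:
  assumes tree: "tree V E" and D: "D \<subseteq> E" "finite D" "\<Union>D \<subseteq> component D s"
    and e: "{u, w} \<in> D" "u \<in> component (D - {{u, w}}) s"
  defines "A \<equiv> D - {{u, w}}"
  shows "w \<notin> component A s"
    and "\<Union>D \<subseteq> component A s \<union> component A w"
    and "card (component_edges A s) + card (component_edges A w) + 1 = card D"
proof -
  have edges: "\<exists>a b. a \<noteq> b \<and> f = {a, b}" if "f \<in> D" for f
    using tree_edge_doubleton[OF tree] D(1) that by (metis subsetD)
  then have "u \<noteq> w" using e(1) by (metis doubleton_eq_iff)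
  show far: "w \<notin> component A s"
  proof
    assume "w \<in> component A s"
    then have "(adj A)\<^sup>*\<^sup>* u w"
      using e(2) unfolding A_def by (meson mem_component_iff rtranclp_adj_sym rtranclp_trans)
    moreover have "A \<subseteq> E - {{u, w}}" using D(1) unfolding A_def by blast
    ultimately show False using tree_edge_bridge[OF tree _ \<open>u \<noteq> w\<close>] D(1) e(1) by blast
  qed
  show cover: "\<Union>D \<subseteq> component A s \<union> component A w"
    using D(3) component_Diff_edge_cover[OF e(2)] unfolding A_def by blast
  have doubletons: "\<forall>f\<in>A. \<exists>a b. f = {a, b}" and nonempty: "{} \<notin> A"
    using edges unfolding A_def by blast+
  have "\<Union>A \<subseteq> component A s \<union> component A w" using cover unfolding A_def by blast
  then have "A = component_edges A s \<union> component_edges A w"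
    by (rule component_edges_cover[OF doubletons])
  moreover have "component_edges A s \<inter> component_edges A w = {}"
    by (rule component_edges_disjoint[OF nonempty far])
  moreover have "finite A" using D(2) unfolding A_def by simp
  moreover have "card A + 1 = card D"
    using D(2) e(1) card_gt_0_iff[of D] unfolding A_def by (auto simp: card_Diff_singleton)
  ultimately show "card (component_edges A s) + card (component_edges A w) + 1 = card D"
    by (metis card_Un_disjoint finite_Un)
qed

lemma tree_cut_edge:
  assumes tree: "tree V E" and D: "D \<subseteq> E" "finite D" "\<Union>D \<subseteq> component D s"
    and e: "{u, w} \<in> D" "u \<in> component (D - {{u, w}}) s"
  defines "D1 \<equiv> component_edges (D - {{u, w}}) s" and "D2 \<equiv> component_edges (D - {{u, w}}) w"
  shows "adj E u w"
    and "D1 \<subseteq> E" "finite D1" "\<Union>D1 \<subseteq> component D1 s"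
    and "D2 \<subseteq> E" "finite D2" "\<Union>D2 \<subseteq> component D2 w"
    and "u \<in> {s} \<union> \<Union>D1" "\<Union>D \<subseteq> {s} \<union> \<Union>D1 \<union> ({w} \<union> \<Union>D2)"
    and "card D1 + card D2 + 1 = card D"
proof -
  note cut = tree_cut_edge_components[OF assms(1-6), folded D1_def D2_def]
  have "u \<noteq> w" using cut(1) e(2) by blast
  then show "adj E u w" using e(1) D(1) unfolding adj_def by blast
  have "D1 \<subseteq> D" "D2 \<subseteq> D"
    using component_edges_subset[of "D - {{u, w}}"] unfolding D1_def D2_def by blast+
  then show "D1 \<subseteq> E" "finite D1" "D2 \<subseteq> E" "finite D2"
    using D(1,2) by (auto intro: finite_subset)
  show "\<Union>D1 \<subseteq> component D1 s" "\<Union>D2 \<subseteq> component D2 w"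
    unfolding D1_def D2_def by (rule Union_component_edges_connected)+
  show "u \<in> {s} \<union> \<Union>D1"
    using e(2) component_subset_component_edges[of "D - {{u, w}}" s] unfolding D1_def by blast
  show "\<Union>D \<subseteq> {s} \<union> \<Union>D1 \<union> ({w} \<union> \<Union>D2)"
    using cut(2) component_subset_component_edges[of "D - {{u, w}}" s]
      component_subset_component_edges[of "D - {{u, w}}" w] unfolding D1_def D2_def by blast
  show "card D1 + card D2 + 1 = card D" by (rule cut(3))
qed

lemma Union_connected_Un:
  assumes "\<Union>A \<subseteq> component A s" "\<Union>B \<subseteq> component B w" "w \<in> component A s"
  shows "\<Union>(A \<union> B) \<subseteq> component (A \<union> B) s"
proof
  fix x assume "x \<in> \<Union>(A \<union> B)"
  then have "(adj A)\<^sup>*\<^sup>* s x \<or> (adj A)\<^sup>*\<^sup>* s w \<and> (adj B)\<^sup>*\<^sup>* w x"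
    using assms by (auto simp: mem_component_iff)
  then show "x \<in> component (A \<union> B) s"
    unfolding mem_component_iff
    by (meson Un_upper1 Un_upper2 rtranclp_adj_mono rtranclp_trans)
qed

lemma reaches_path_off_path:
  assumes "(adj D)\<^sup>*\<^sup>* s x" "s \<in> set P"
  shows "\<exists>p\<in>set P. (adj (D - path_edges P))\<^sup>*\<^sup>* x p"
  using assms(1)
proof (induction rule: rtranclp_induct)
  case base
  then show ?case using assms(2) by blast
next
  case (step y z)
  show ?case
  proof (cases "{y, z} \<in> path_edges P")
    case True
    then have "z \<in> set P" using Union_path_edges_subset[of P] by auto
    then show ?thesis by blast
  next
    case False
    then have "adj (D - path_edges P) z y"
      using adj_sym[OF step(2)] unfolding adj_def by (auto simp: insert_commute)
    then show ?thesis using step.IH by (meson converse_rtranclp_into_rtranclp)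
  qed
qed

lemma last_edge_separates:
  assumes tree: "tree V E" and "D \<subseteq> E" "x \<in> component D s" "x \<noteq> s"
  obtains h where "h \<in> D" "x \<in> h" "x \<notin> component (D - {h}) s"
proof -
  have "(adj D)\<^sup>*\<^sup>* s x" using assms(3) by (simp add: mem_component_iff)
  then obtain Q where Q: "is_path D Q" "hd Q = s" "last Q = x"
    by (metis rtranclp_adj_imp_path)
  define n where "n = length Q"
  have "n \<noteq> 0" "n \<noteq> 1"
    using is_path_nonempty[OF Q(1)] Q(2,3) assms(4) unfolding n_def
    by (auto simp: hd_conv_nth last_conv_nth)
  then have n: "n \<ge> 2" by linarith
  define q where "q = Q ! (n - 2)"
  have x: "x = Q ! (n - 1)" using Q(3) is_path_nonempty[OF Q(1)] unfolding n_def by (simp add: last_conv_nth)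
  have "adj D (Q ! (n - 2)) (Q ! (n - 2 + 1))" using Q(1) n unfolding is_path_def n_def by auto
  moreover have "n - 2 + 1 = n - 1" using n by simp
  ultimately have "adj D q x" using x by (simp add: q_def)
  then have h: "{q, x} \<in> D" "q \<noteq> x" unfolding adj_def by auto
  have "(adj (D - {{q, x}}))\<^sup>*\<^sup>* (Q ! 0) (Q ! (n - 2))"
  proof (rule rtranclp_nth_chain)
    fix m assume m: "m < n - 2"
    then have "adj D (Q ! m) (Q ! Suc m)" "Q ! m \<noteq> x" "Q ! Suc m \<noteq> x"
      using Q(1) x unfolding is_path_def n_def by (auto simp: nth_eq_iff_index_eq)
    then show "Q ! m = Q ! Suc m \<or> adj (D - {{q, x}}) (Q ! m) (Q ! Suc m)"
      unfolding adj_def by (auto simp: doubleton_eq_iff)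
  qed simp
  then have "(adj (D - {{q, x}}))\<^sup>*\<^sup>* q s"
    using Q(2) is_path_nonempty[OF Q(1)] by (simp add: q_def hd_conv_nth rtranclp_adj_sym)
  moreover have "\<not> (adj (D - {{q, x}}))\<^sup>*\<^sup>* q x"
    using tree_edge_bridge[OF tree _ h(2), of "D - {{q, x}}"] h(1) assms(2) by blast
  ultimately have "x \<notin> component (D - {{q, x}}) s"
    by (meson mem_component_iff rtranclp_trans)
  then show ?thesis using that h(1) by blast
qed

lemma path_vertices_disconnected:
  assumes tree: "tree V E" and P: "is_path E P" and A: "A \<subseteq> E - path_edges P"
    and "p \<in> set P" "q \<in> set P" "(adj A)\<^sup>*\<^sup>* p q"
  shows "p = q"
proof -
  have not_connected: "\<not> (adj A)\<^sup>*\<^sup>* (P ! a) (P ! b)" if ab: "a < b" "b < length P" for a b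
  proof
    assume reach: "(adj A)\<^sup>*\<^sup>* (P ! a) (P ! b)"
    define h where "h = {P ! (b - 1), P ! b}"
    have dist: "distinct P" using P unfolding is_path_def by simp
    have hP: "h \<in> path_edges P" unfolding h_def path_edges_def using ab
      by (intro CollectI exI[of _ "b - 1"]) auto
    have ne: "P ! (b - 1) \<noteq> P ! b" using dist ab by (auto simp: nth_eq_iff_index_eq)
    define B where "B = (path_edges P - {h}) \<union> A"
    have "(adj B)\<^sup>*\<^sup>* (P ! a) (P ! (b - 1))"
    proof (rule rtranclp_nth_chain)
      fix m assume m: "a \<le> m" "m < b - 1"
      then have "{P ! m, P ! (m + 1)} \<in> path_edges P" "P ! m \<noteq> P ! Suc m"
        "P ! m \<noteq> P ! b" "P ! Suc m \<noteq> P ! b"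
        using dist ab unfolding path_edges_def by (auto simp: nth_eq_iff_index_eq)
      then show "P ! m = P ! Suc m \<or> adj B (P ! m) (P ! Suc m)"
        unfolding adj_def B_def h_def by (auto simp: doubleton_eq_iff)
    qed (use ab in auto)
    then have "(adj B)\<^sup>*\<^sup>* (P ! (b - 1)) (P ! b)"
      using rtranclp_adj_mono[OF reach, of B] unfolding B_def
      by (meson Un_upper2 rtranclp_adj_sym rtranclp_trans)
    moreover have "h \<in> E" "B \<subseteq> E - {h}"
      using hP A path_edges_subset[OF P] unfolding B_def by auto
    ultimately show False using tree_edge_bridge[OF tree _ ne] unfolding h_def by blast
  qed
  obtain a b where "a < length P" "P ! a = p" "b < length P" "P ! b = q"
    using assms(4,5) by (meson in_set_conv_nth)
  then show ?thesis
    using not_connected[of a b] not_connected[of b a] assms(6) rtranclp_adj_sym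
    by (metis linorder_neqE_nat)
qed

section \<open>Touring a connected edge set\<close>

lemma exists_tour:
  assumes tree: "tree V E"
  shows "D \<subseteq> E \<Longrightarrow> finite D \<Longrightarrow> s \<in> V \<Longrightarrow> \<Union>D \<subseteq> component D s \<Longrightarrow>
    is_path D P \<Longrightarrow> hd P = s \<Longrightarrow>
    \<exists>T. is_walk V E T \<and> hd T = s \<and> last T = last P \<and> {s} \<union> \<Union>D \<subseteq> set T
      \<and> walk_length T + card (path_edges P) \<le> 2 * card D"
proof (induction "card D" arbitrary: D s P rule: less_induct)
  case less
  note D = less.prems(1-4) and P = less.prems(5,6)
  have ne: "P \<noteq> []" using is_path_nonempty[OF P(1)] .
  show ?case
  proof (cases "D \<subseteq> path_edges P")
    case True
    then have DP: "D = path_edges P" using path_edges_subset[OF P(1)] by auto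
    have "set P \<subseteq> {s} \<union> \<Union>D" using set_path_subset[OF ne] P(2) DP by simp
    also have "\<dots> \<subseteq> V" using D(1,3) tree_Union_edges_subset[OF tree] by auto
    finally have walk: "is_walk V E P" "walk_length P = card (path_edges P)"
      using path_is_walk[OF is_path_mono[OF P(1) D(1)]] by auto
    have "{s} \<union> \<Union>D \<subseteq> set P" using DP Union_path_edges_subset[of P] ne P(2) by auto
    then show ?thesis using walk DP P(2) by (intro exI[of _ P]) auto
  next
    case False
    \<comment> \<open>cut at an edge off \<open>P\<close>, tour the near side along \<open>P\<close> and splice in a closed tour of
      the far side\<close>
    then obtain e where e: "e \<in> D" "e \<notin> path_edges P" by blast
    then obtain a b where "e = {a, b}" using tree_edge_doubleton[OF tree] D(1) by blast
    then obtain u w where uw: "e = {u, w}" "u \<in> component (D - {e}) s"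
      using Diff_edge_endpoint_in_component[OF D(4)] e(1) by (metis insert_commute)
    define D1 where "D1 = component_edges (D - {e}) s"
    define D2 where "D2 = component_edges (D - {e}) w"
    have "{u, w} \<in> D" "u \<in> component (D - {{u, w}}) s" using e(1) uw by simp_all
    note cut = tree_cut_edge[OF tree D(1,2,4) this, folded uw(1), folded D1_def D2_def]
    have "is_path D1 P"
      using is_path_component_edges[OF is_path_Diff_edge[OF P(1) e(2)]] P(2) unfolding D1_def by simp
    then obtain T1 where T1: "is_walk V E T1" "hd T1 = s" "last T1 = last P"
        "{s} \<union> \<Union>D1 \<subseteq> set T1" "walk_length T1 + card (path_edges P) \<le> 2 * card D1"
      using less.hyps[OF _ cut(2,3) D(3) cut(4) _ P(2)] cut(10) by auto
    have "w \<in> V" using D(1) e(1) uw(1) tree_Union_edges_subset[OF tree] by auto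
    then obtain T2 where T2: "is_walk V E T2" "hd T2 = w" "last T2 = w"
        "{w} \<union> \<Union>D2 \<subseteq> set T2" "walk_length T2 \<le> 2 * card D2"
      using less.hyps[OF _ cut(5,6) _ cut(7) is_path_singleton] cut(10) by (auto simp: path_edges_def)
    have "u \<in> set T1" using cut(8) T1(4) by auto
    then obtain T where T: "is_walk V E T" "hd T = s" "last T = last P"
        "set T = set T1 \<union> set T2" "walk_length T = walk_length T1 + walk_length T2 + 2"
      using walk_splice[OF T1(1) _ T2(1-3) cut(1)] T1(2,3) by metis
    have "{s} \<union> \<Union>D \<subseteq> set T" using cut(9) T(4) T1(4) T2(4) by blast
    then show ?thesis using T T1(5) T2(5) cut(10) by (intro exI[of _ T]) auto
  qed
qed

section \<open>Optimal strategies\<close>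

locale optimal_strategy =
  fixes V :: "'a set" and E :: "'a set set" and s :: "nat \<Rightarrow> 'a"
    and k :: nat and W :: "nat \<Rightarrow> 'a list"
  assumes tree: "tree V E"
    and starts: "\<forall>i<k. s i \<in> V"
    and strategy: "strategy V E s k W" and covering: "covering V k W"
    and minimal: "\<forall>W'. strategy V E s k W' \<and> covering V k W' \<longrightarrow>
               strategy_length k W \<le> strategy_length k W'"
begin

lemma walk: "i < k \<Longrightarrow> is_walk V E (W i)" "i < k \<Longrightarrow> hd (W i) = s i"
  using strategy unfolding strategy_def by auto

lemma replace_walks_le:
  assumes I: "I \<subseteq> {..<k}" and W': "\<forall>i\<in>I. is_walk V E (W' i) \<and> hd (W' i) = s i"
    and cover: "(\<Union>i\<in>I. set (W i)) \<subseteq> (\<Union>i\<in>I. set (W' i))"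
  shows "(\<Sum>i\<in>I. walk_length (W i)) \<le> (\<Sum>i\<in>I. walk_length (W' i))"
proof -
  define W'' where "W'' i = (if i \<in> I then W' i else W i)" for i
  have "strategy V E s k W''" using strategy W' unfolding strategy_def W''_def by auto
  moreover have "covering V k W''"
    using covering cover I unfolding covering_def W''_def by (fastforce split: if_splits)
  ultimately have "strategy_length k W \<le> strategy_length k W''" using minimal by blast
  moreover have split: "strategy_length k X
      = (\<Sum>i\<in>I. walk_length (X i)) + (\<Sum>i\<in>{..<k} - I. walk_length (X i))" for X
    unfolding strategy_length_def using I by (simp add: sum.subset_diff add.commute)
  moreover have "(\<Sum>i\<in>I. walk_length (W'' i)) = (\<Sum>i\<in>I. walk_length (W' i))"
    by (rule sum.cong) (simp_all add: W''_def)
  moreover have "(\<Sum>i\<in>{..<k} - I. walk_length (W'' i)) = (\<Sum>i\<in>{..<k} - I. walk_length (W i))"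
    by (rule sum.cong) (simp_all add: W''_def)
  ultimately show ?thesis by (metis add_le_cancel_right)
qed

end

locale optimal_strategy_with_paths = optimal_strategy +
  fixes P :: "nat \<Rightarrow> 'a list"
  assumes paths: "\<forall>i<k. is_path (traversed (W i)) (P i) \<and> hd (P i) = hd (W i) \<and> last (P i) = last (W i)"
begin

lemma path: "i < k \<Longrightarrow> is_path (traversed (W i)) (P i)" "i < k \<Longrightarrow> hd (P i) = s i"
  using paths walk by auto

lemma path_in_tree: "i < k \<Longrightarrow> is_path E (P i)"
  using is_path_mono[OF path(1) traversed_subset[OF walk(1)]] .

lemma start_in_path: "i < k \<Longrightarrow> s i \<in> set (P i)"
  using path is_path_nonempty by (metis list.set_sel(1))

lemma set_path_subset_walk:
  assumes "i < k"
  shows "set (P i) \<subseteq> set (W i)"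
proof -
  have "set (P i) \<subseteq> {s i} \<union> \<Union>(path_edges (P i))"
    using set_path_subset[OF is_path_nonempty[OF path(1)[OF assms]]] path(2)[OF assms] by simp
  also have "\<dots> \<subseteq> {s i} \<union> \<Union>(traversed (W i))"
    using path_edges_subset[OF path(1)[OF assms]] by blast
  also have "\<dots> \<subseteq> set (W i)"
    using Union_traversed_subset[of "W i"] hd_in_set[OF is_walk_nonempty[OF walk(1)[OF assms]]]
      walk(2)[OF assms] by auto
  finally show ?thesis .
qed

lemma set_walk_in_component: "i < k \<Longrightarrow> set (W i) \<subseteq> component (traversed (W i)) (s i)"
  using set_walk_subset_component[OF walk(1)] walk(2) by simp

lemma traversed_connected: "i < k \<Longrightarrow> \<Union>(traversed (W i)) \<subseteq> component (traversed (W i)) (s i)"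
  using set_walk_in_component Union_traversed_subset by (rule subset_trans[rotated])

lemma optimal_walk_length:
  assumes i: "i < k"
  shows "walk_length (W i) + card (path_edges (P i)) = 2 * card (traversed (W i))"
proof -
  obtain T where T: "is_walk V E T" "hd T = s i" "{s i} \<union> \<Union>(traversed (W i)) \<subseteq> set T"
      "walk_length T + card (path_edges (P i)) \<le> 2 * card (traversed (W i))"
    using exists_tour[OF tree traversed_subset[OF walk(1)[OF i]] finite_traversed _
        traversed_connected[OF i] path[OF i]] starts i by blast
  have "set (W i) \<subseteq> set T" using set_walk_subset[OF walk(1)[OF i]] T(3) walk(2)[OF i] by auto
  then have "walk_length (W i) \<le> walk_length T"
    using replace_walks_le[of "{i}" "\<lambda>_. T"] T(1,2) i by auto
  moreover have "2 * card (traversed (W i)) \<le> walk_length (W i) + card (path_edges (P i))"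
    using walk_length_lower_bound[OF tree walk(1)[OF i] path(1)[OF i]] paths i by auto
  ultimately show ?thesis using T(4) by linarith
qed

lemma trav_count_eq:
  assumes "i < k" "e \<in> traversed (W i)"
  shows "trav_count (W i) e = (if e \<in> path_edges (P i) then 1 else 2)"
proof -
  have P: "is_path E (P i)" "hd (P i) = hd (W i)" "last (P i) = last (W i)"
    using is_path_mono[OF path(1) traversed_subset[OF walk(1)]] paths assms(1) by auto
  have ge: "(if e \<in> path_edges (P i) then 1 else 2) \<le> trav_count (W i) e"
    if "e \<in> traversed (W i)" for e
    using trav_count_ge_path_weight[OF tree walk(1) P] assms(1) that by blast
  have "(\<Sum>e\<in>traversed (W i). if e \<in> path_edges (P i) then 1 else 2)
      = (\<Sum>e\<in>traversed (W i). trav_count (W i) e)"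
    using optimal_walk_length[OF assms(1)] walk_length_eq_sum_trav_count[of "W i"]
      sum_path_weight[OF finite_traversed path_edges_subset[OF path(1)[OF assms(1)]]] by simp
  from sum_mono_inv[OF this ge assms(2) finite_traversed] show ?thesis by simp
qed

lemma exists_extended_walk:
  assumes i: "i < k" and B: "B \<subseteq> E" "finite B" "\<Union>B \<subseteq> component B w" and "w \<in> set (W i)"
  shows "\<exists>T. is_walk V E T \<and> hd T = s i \<and> set (W i) \<union> \<Union>B \<subseteq> set T
    \<and> walk_length T \<le> walk_length (W i) + 2 * card B"
proof -
  define D where "D = traversed (W i) \<union> B"
  have D: "D \<subseteq> E" "finite D" using traversed_subset[OF walk(1)[OF i]] B(1,2) finite_traversed
    unfolding D_def by auto
  have "w \<in> component (traversed (W i)) (s i)" using set_walk_in_component[OF i] assms(5) by blast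
  then have conn: "\<Union>D \<subseteq> component D (s i)"
    unfolding D_def by (rule Union_connected_Un[OF traversed_connected[OF i] B(3)])
  have "is_path D (P i)" using is_path_mono[OF path(1)[OF i]] unfolding D_def by blast
  then obtain T where T: "is_walk V E T" "hd T = s i" "{s i} \<union> \<Union>D \<subseteq> set T"
      "walk_length T + card (path_edges (P i)) \<le> 2 * card D"
    using exists_tour[OF tree D _ conn _ path(2)[OF i]] starts i by blast
  have "card D \<le> card (traversed (W i)) + card B" unfolding D_def by (rule card_Un_le)
  moreover have "set (W i) \<subseteq> set T"
    using set_walk_subset[OF walk(1)[OF i]] T(3) walk(2)[OF i] unfolding D_def by auto
  ultimately show ?thesis
    using T optimal_walk_length[OF i] unfolding D_def by (intro exI[of _ T]) auto
qed

text \<open>Exchange argument: robot \<open>r\<close> takes over everything beyond \<open>e\<close>, which saves the two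
  traversals of \<open>e\<close>.\<close>

lemma far_endpoint_not_visited:
  assumes i: "i < k" "r < k" "r \<noteq> i"
    and e: "e \<in> traversed (W i)" "e \<notin> path_edges (P i)"
    and w: "w \<in> e" "w \<notin> component (traversed (W i) - {e}) (s i)"
  shows "w \<notin> set (W r)"
proof
  assume visited: "w \<in> set (W r)"
  define D where "D = traversed (W i)"
  have D: "D \<subseteq> E" "finite D" "\<Union>D \<subseteq> component D (s i)"
    using traversed_subset[OF walk(1)[OF i(1)]] finite_traversed traversed_connected[OF i(1)]
    unfolding D_def by blast+
  obtain a b where "e = {a, b}" using tree_edge_doubleton[OF tree] e(1) D(1) unfolding D_def by blast
  then obtain u where u: "e = {u, w}" using w(1) by (metis insert_commute insertE singletonD)
  then have near: "{u, w} \<in> D" "u \<in> component (D - {{u, w}}) (s i)"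
    using Diff_edge_endpoint_in_component[OF D(3), of u w] e(1) w(2) unfolding D_def by auto
  define D1 where "D1 = component_edges (D - {e}) (s i)"
  define D2 where "D2 = component_edges (D - {e}) w"
  note cut = tree_cut_edge[OF tree D near, folded u, folded D1_def D2_def]
  have "is_path D1 (P i)"
    using is_path_component_edges[OF is_path_Diff_edge[OF path(1)[OF i(1)] e(2)]] path(2)[OF i(1)]
    unfolding D1_def D_def by simp
  then obtain T1 where T1: "is_walk V E T1" "hd T1 = s i" "{s i} \<union> \<Union>D1 \<subseteq> set T1"
      "walk_length T1 + card (path_edges (P i)) \<le> 2 * card D1"
    using exists_tour[OF tree cut(2,3) _ cut(4) _ path(2)[OF i(1)]] starts i(1) by blast
  obtain T2 where T2: "is_walk V E T2" "hd T2 = s r" "set (W r) \<union> \<Union>D2 \<subseteq> set T2"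
      "walk_length T2 \<le> walk_length (W r) + 2 * card D2"
    using exists_extended_walk[OF i(2) cut(5-7) visited] by blast
  have "set (W i) \<subseteq> {s i} \<union> \<Union>D"
    using set_walk_subset[OF walk(1)[OF i(1)]] walk(2)[OF i(1)] unfolding D_def by simp
  then have "set (W i) \<union> set (W r) \<subseteq> set T1 \<union> set T2"
    using cut(9) T1(3) T2(3) visited by blast
  then have "walk_length (W i) + walk_length (W r) \<le> walk_length T1 + walk_length T2"
    using replace_walks_le[of "{i, r}" "(\<lambda>_. T1)(r := T2)"] T1(1,2) T2(1,2) i by auto
  then show False using T1(4) T2(4) optimal_walk_length[OF i(1)] cut(10) unfolding D_def by linarith
qed

lemma off_path_vertex_not_visited:
  assumes i: "i < k" "r < k" "r \<noteq> i"
    and x: "x \<in> \<Union>(traversed (W i))" "x \<notin> set (P i)"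
  shows "x \<notin> set (W r)"
proof -
  have "x \<in> component (traversed (W i)) (s i)" using x(1) traversed_connected[OF i(1)] by blast
  moreover have "x \<noteq> s i" using x(2) start_in_path[OF i(1)] by blast
  ultimately obtain h where h: "h \<in> traversed (W i)" "x \<in> h"
      "x \<notin> component (traversed (W i) - {h}) (s i)"
    using last_edge_separates[OF tree traversed_subset[OF walk(1)[OF i(1)]]] by blast
  have "h \<notin> path_edges (P i)" using h(2) x(2) Union_path_edges_subset[of "P i"] by blast
  then show ?thesis using far_endpoint_not_visited[OF i h(1) _ h(2,3)] by blast
qed

definition forest :: "nat \<Rightarrow> 'a set set" where
  "forest i = traversed (W i) - path_edges (P i)"

lemma traversed_eq_path_edges_Un_forest: "i < k \<Longrightarrow> traversed (W i) = path_edges (P i) \<union> forest i"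
  using path_edges_subset[OF path(1)] unfolding forest_def by blast

lemma trav_count_path_edge: "i < k \<Longrightarrow> e \<in> path_edges (P i) \<Longrightarrow> trav_count (W i) e = 1"
  using trav_count_eq[of i e] path_edges_subset[OF path(1), of i] by auto

lemma trav_count_forest_edge: "i < k \<Longrightarrow> e \<in> forest i \<Longrightarrow> trav_count (W i) e = 2"
  using trav_count_eq[of i e] unfolding forest_def by auto

lemma path_edges_Int_forest: "path_edges (P i) \<inter> forest i = {}"
  unfolding forest_def by blast

lemma forest_subset: "i < k \<Longrightarrow> forest i \<subseteq> E"
  using traversed_subset[OF walk(1)] unfolding forest_def by blast

lemma forest_edge_exclusive:
  assumes i: "i < k" "j < k" "j \<noteq> i" and "e \<in> forest i"
  shows "trav_count (W j) e = 0"
proof (rule ccontr)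
  assume "trav_count (W j) e \<noteq> 0"
  then have "e \<in> traversed (W j)" using trav_count_pos_iff by blast
  then have visited: "e \<subseteq> set (W j)" using Union_traversed_subset[of "W j"] by blast
  have e: "e \<in> traversed (W i)" "e \<notin> path_edges (P i)" using assms(4) unfolding forest_def by auto
  have "e \<in> E" using e(1) traversed_subset[OF walk(1)[OF i(1)]] by blast
  then obtain a b where ab: "a \<noteq> b" "e = {a, b}" using tree_edge_doubleton[OF tree] by metis
  have "traversed (W i) - {e} \<subseteq> E - {e}" using traversed_subset[OF walk(1)[OF i(1)]] by blast
  then have "\<not> (adj (traversed (W i) - {e}))\<^sup>*\<^sup>* a b"
    using tree_edge_bridge[OF tree _ ab(1)] \<open>e \<in> E\<close> ab(2) by blast
  then obtain w where "w \<in> e" "w \<notin> component (traversed (W i) - {e}) (s i)"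
    using ab(2) unfolding mem_component_iff by (meson insertCI rtranclp_adj_sym rtranclp_trans)
  then show False using far_endpoint_not_visited[OF i e] visited by blast
qed

lemma forest_component_meets_paths_once:
  assumes i: "i < k" and v: "v \<in> edge_verts (forest i)"
  shows "card (component (forest i) v \<inter> (\<Union>r<k. set (P r))) = 1"
proof -
  have "v \<in> component (traversed (W i)) (s i)"
    using v traversed_connected[OF i] unfolding edge_verts_def forest_def by blast
  then obtain p where p: "p \<in> set (P i)" "(adj (forest i))\<^sup>*\<^sup>* v p"
    using reaches_path_off_path[OF _ start_in_path[OF i]] unfolding forest_def mem_component_iff
    by blast
  have "z = p" if z: "z \<in> component (forest i) v" "r < k" "z \<in> set (P r)" for z r
  proof -
    have "z = v \<or> z \<in> edge_verts (forest i)"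
      using z(1) rtranclp_adj_in_Union by (simp add: mem_component_iff edge_verts_def)
    then have "z \<in> \<Union>(traversed (W i))" using v unfolding edge_verts_def forest_def by blast
    then have "z \<in> set (P i)"
      using off_path_vertex_not_visited[OF i z(2)] set_path_subset_walk[OF z(2)] z(3) by blast
    moreover have "(adj (forest i))\<^sup>*\<^sup>* z p"
      using z(1) p(2) unfolding mem_component_iff by (meson rtranclp_adj_sym rtranclp_trans)
    moreover have "forest i \<subseteq> E - path_edges (P i)"
      using forest_subset[OF i] unfolding forest_def by blast
    ultimately show "z = p"
      using path_vertices_disconnected[OF tree path_in_tree[OF i] _ _ p(1)] by blast
  qed
  moreover have "p \<in> component (forest i) v" "p \<in> (\<Union>r<k. set (P r))"
    using p i by (auto simp: mem_component_iff)
  ultimately have "component (forest i) v \<inter> (\<Union>r<k. set (P r)) = {p}" by blast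
  then show ?thesis by simp
qed

lemma forest_vertices_shared_on_paths:
  assumes "j < k" "l < k" "j \<noteq> l"
  shows "edge_verts (forest j) \<inter> edge_verts (forest l) \<subseteq> (\<Union>r<k. set (P r))"
proof
  fix x assume x: "x \<in> edge_verts (forest j) \<inter> edge_verts (forest l)"
  show "x \<in> (\<Union>r<k. set (P r))"
  proof (rule ccontr)
    assume "x \<notin> (\<Union>r<k. set (P r))"
    then have "x \<notin> set (W l)"
      using off_path_vertex_not_visited[OF assms(1,2)] assms(1,3) x
      unfolding edge_verts_def forest_def by blast
    then show False using Union_traversed_subset[of "W l"] x unfolding edge_verts_def forest_def by blast
  qed
qed

end

theorem lemma1:
  fixes V :: "'a set" and E :: "'a set set" and s :: "nat \<Rightarrow> 'a"
    and k :: nat and W :: "nat \<Rightarrow> 'a list"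
  assumes "tree V E"
    and "k \<ge> 1"
    and "\<forall>i<k. s i \<in> V"
    and "strategy V E s k W" and "covering V k W"
    and "\<forall>W'. strategy V E s k W' \<and> covering V k W' \<longrightarrow>
               strategy_length k W \<le> strategy_length k W'"
  shows "\<exists>P F. (\<forall>i<k. is_path E (P i) \<and> hd (P i) = hd (W i) \<and> last (P i) = last (W i)
                  \<and> F i \<subseteq> E
                  \<and> traversed (W i) = path_edges (P i) \<union> F i
                  \<and> path_edges (P i) \<inter> F i = {}
                  \<and> (\<forall>e\<in>path_edges (P i). trav_count (W i) e = 1)
                  \<and> (\<forall>e\<in>F i. trav_count (W i) e = 2 \<and>
                        (\<forall>j<k. j \<noteq> i \<longrightarrow> trav_count (W j) e = 0))
                  \<and> (\<forall>v\<in>edge_verts (F i).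
                        card (component (F i) v \<inter> (\<Union>r<k. set (P r))) = 1))
             \<and> (\<forall>j<k. \<forall>l<k. j \<noteq> l \<longrightarrow>
                  edge_verts (F j) \<inter> edge_verts (F l) \<subseteq> (\<Union>r<k. set (P r)))"
proof -
  have "\<forall>i<k. \<exists>Q. is_path (traversed (W i)) Q \<and> hd Q = hd (W i) \<and> last Q = last (W i)"
    using assms(4) walk_path_between_ends unfolding strategy_def by blast
  then obtain P where "\<forall>i<k. is_path (traversed (W i)) (P i) \<and> hd (P i) = hd (W i)
      \<and> last (P i) = last (W i)"
    by metis
  then interpret optimal_strategy_with_paths V E s k W P
    using assms by unfold_locales auto
  show ?thesis
    by (intro exI[of _ P] exI[of _ forest] conjI allI impI ballI)
      (simp_all add: paths path_in_tree forest_subset traversed_eq_path_edges_Un_forest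
        path_edges_Int_forest trav_count_path_edge trav_count_forest_edge
        forest_component_meets_paths_once forest_vertices_shared_on_paths forest_edge_exclusive)
qed

end
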